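(* Let $S=\{(n,k)\in\mathbb Z_{>0}^2:\gcd(n,k)=1,\ n\ge3,\ n-k\text{ odd},\ k\not\equiv2\ (\mathrm{mod}\ 4)\}$ and $T=\{(m,q)\in\mathbb Z^2:1<q<m,\ \gcd(m,q)=1\}$. Define $\theta:S\to T$ by $\theta(n,k)=(n+\tfrac k2,\,n)$ if $n$ is odd and $\theta(n,k)=(\tfrac n2+k,\,\tfrac n2)$ if $n$ is even. Then $\theta$ is a well-defined bijection (with inverse $(m,q)\mapsto(q,2(m-q))$ if $m-q$ is even and $(m,q)\mapsto(2q,m-q)$ if $m-q$ is odd), and for every $(n,k)\in S$ there is an isomorphism $\Bbbk_{-1}[u,v]^{G_{n,k}}\cong\Bbbk[u,v]^{\mathbb D_{\theta(n,k)}}$.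
   Context: $\Bbbk$ is algebraically closed of characteristic $0$; $\Bbbk_{-1}[u,v]=\Bbbk\langle u,v\rangle/(vu+uv)$ and $\Bbbk[u,v]$ is the commutative polynomial ring; matrices $\begin{pmatrix}a&b\\c&d\end{pmatrix}$ act by $u\mapsto au+cv$, $v\mapsto bu+dv$. $G_{n,k}$ is generated by $\mathrm{diag}(\omega^{2k},\omega^{-2k})$ and $\begin{pmatrix}0&\omega^n\\\omega^n&0\end{pmatrix}$ for $\omega$ a primitive $(2nk)$th root of unity. For $(m,q)\in T$ and $\eta$ a primitive $4q(m-q)$th root of unity, $\mathbb D_{m,q}\le\mathrm{GL}(2,\Bbbk)$ is generated by $\mathrm{diag}(\eta^{2(m-q)},\eta^{-2(m-q)})$ and $\begin{pmatrix}0&\eta^q\\\eta^q&0\end{pmatrix}$. *)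

theory Defs
  imports "HOL-Computational_Algebra.Polynomial"
begin

definition alg_closed :: "'k::field itself \<Rightarrow> bool" where
  "alg_closed _ \<longleftrightarrow> (\<forall>p :: 'k poly. degree p > 0 \<longrightarrow> (\<exists>x. poly p x = 0))"

definition primitive_root :: "nat \<Rightarrow> 'k::field \<Rightarrow> bool" where
  "primitive_root N w \<longleftrightarrow> N > 0 \<and> w ^ N = 1 \<and> (\<forall>j. 0 < j \<and> j < N \<longrightarrow> w ^ j \<noteq> 1)"

section \<open>The rings k_e[u,v]: vu = e uv (e = -1 skew, e = 1 commutative)\<close>

text \<open>An element is a finitely supported coefficient function on monomials u^i v^j,
  indexed by (i,j).\<close>

type_synonym 'k qpoly = "nat \<times> nat \<Rightarrow> 'k"

definition supp :: "'k::zero qpoly \<Rightarrow> (nat \<times> nat) set" where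
  "supp p = {m. p m \<noteq> 0}"

definition qpolys :: "'k::zero qpoly set" where
  "qpolys = {p. finite (supp p)}"

definition qadd :: "'k::field qpoly \<Rightarrow> 'k qpoly \<Rightarrow> 'k qpoly" where
  "qadd p q = (\<lambda>m. p m + q m)"

definition qsmult :: "'k::field \<Rightarrow> 'k qpoly \<Rightarrow> 'k qpoly" where
  "qsmult c p = (\<lambda>m. c * p m)"

definition qone :: "'k::field qpoly" where
  "qone = (\<lambda>m. if m = (0,0) then 1 else 0)"

definition qU :: "'k::field qpoly" where
  "qU = (\<lambda>m. if m = (1,0) then 1 else 0)"

definition qV :: "'k::field qpoly" where
  "qV = (\<lambda>m. if m = (0,1) then 1 else 0)"

text \<open>(u^a v^b)(u^c v^d) = e^(b c) u^(a+c) v^(b+d).\<close>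
definition qmult :: "'k::field \<Rightarrow> 'k qpoly \<Rightarrow> 'k qpoly \<Rightarrow> 'k qpoly" where
  "qmult e p q = (\<lambda>(i,j). \<Sum>a\<le>i. \<Sum>b\<le>j. e ^ (b * (i - a)) * p (a,b) * q (i - a, j - b))"

fun qpow :: "'k::field \<Rightarrow> 'k qpoly \<Rightarrow> nat \<Rightarrow> 'k qpoly" where
  "qpow e p 0 = qone"
| "qpow e p (Suc n) = qmult e (qpow e p n) p"

text \<open>(a,b,c,d) stands for the matrix [[a,b],[c,d]].\<close>
type_synonym 'k mat2 = "'k \<times> 'k \<times> 'k \<times> 'k"

fun mmult :: "'k::field mat2 \<Rightarrow> 'k mat2 \<Rightarrow> 'k mat2" where
  "mmult (a,b,c,d) (a',b',c',d') = (a*a' + b*c', a*b' + b*d', c*a' + d*c', c*b' + d*d')"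

fun minv :: "'k::field mat2 \<Rightarrow> 'k mat2" where
  "minv (a,b,c,d) = (let t = a*d - b*c in (d/t, -b/t, -c/t, a/t))"

definition mid :: "'k::field mat2" where
  "mid = (1,0,0,1)"

inductive_set gen_group :: "'k::field mat2 set \<Rightarrow> 'k mat2 set" for gens where
  gg_id: "mid \<in> gen_group gens"
| gg_gen: "g \<in> gens \<Longrightarrow> g \<in> gen_group gens"
| gg_inv: "g \<in> gen_group gens \<Longrightarrow> minv g \<in> gen_group gens"
| gg_mult: "g \<in> gen_group gens \<Longrightarrow> h \<in> gen_group gens \<Longrightarrow> mmult g h \<in> gen_group gens"

text \<open>The matrix [[a,b],[c,d]] acts by u \<mapsto> a u + c v, v \<mapsto> b u + d v, extended
  multiplicatively: u^i v^j \<mapsto> (g u)^i (g v)^j.\<close>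
fun qact :: "'k::field \<Rightarrow> 'k mat2 \<Rightarrow> 'k qpoly \<Rightarrow> 'k qpoly" where
  "qact e (a,b,c,d) p =
     (let gu = qadd (qsmult a qU) (qsmult c qV);
          gv = qadd (qsmult b qU) (qsmult d qV)
      in (\<lambda>m. \<Sum>x\<in>supp p. p x * qmult e (qpow e gu (fst x)) (qpow e gv (snd x)) m))"

definition invariants :: "'k::field \<Rightarrow> 'k mat2 set \<Rightarrow> 'k qpoly set" where
  "invariants e G = {p \<in> qpolys. \<forall>g\<in>G. qact e g p = p}"

definition alg_iso_invariants ::
  "'k::field \<Rightarrow> 'k mat2 set \<Rightarrow> 'k \<Rightarrow> 'k mat2 set \<Rightarrow> bool" where
  "alg_iso_invariants e1 G e2 H \<longleftrightarrow>
     (\<exists>f. bij_betw f (invariants e1 G) (invariants e2 H)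
        \<and> (\<forall>x\<in>invariants e1 G. \<forall>y\<in>invariants e1 G.
              f (qadd x y) = qadd (f x) (f y) \<and> f (qmult e1 x y) = qmult e2 (f x) (f y))
        \<and> (\<forall>c. \<forall>x\<in>invariants e1 G. f (qsmult c x) = qsmult c (f x))
        \<and> f qone = qone)"

definition G_grp :: "int \<Rightarrow> int \<Rightarrow> 'k::field \<Rightarrow> 'k mat2 set" where
  "G_grp n k w = gen_group {(w powi (2*k), 0, 0, w powi (-2*k)), (0, w powi n, w powi n, 0)}"

definition D_grp :: "int \<Rightarrow> int \<Rightarrow> 'k::field \<Rightarrow> 'k mat2 set" where
  "D_grp m q h = gen_group {(h powi (2*(m-q)), 0, 0, h powi (-2*(m-q))), (0, h powi q, h powi q, 0)}"

definition S_set :: "(int \<times> int) set" where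
  "S_set = {(n,k). n > 0 \<and> k > 0 \<and> gcd n k = 1 \<and> n \<ge> 3 \<and> odd (n - k) \<and> k mod 4 \<noteq> 2}"

definition T_set :: "(int \<times> int) set" where
  "T_set = {(m,q). 1 < q \<and> q < m \<and> gcd m q = 1}"

definition theta :: "int \<times> int \<Rightarrow> int \<times> int" where
  "theta = (\<lambda>(n,k). if odd n then (n + k div 2, n) else (n div 2 + k, n div 2))"

definition theta_inv :: "int \<times> int \<Rightarrow> int \<times> int" where
  "theta_inv = (\<lambda>(m,q). if even (m - q) then (q, 2*(m-q)) else (2*q, m - q))"

end

theory Submission
  imports Defs
begin

text \<open>Both groups are generated by a diagonal and an antidiagonal matrix, so invariance of a
  (skew) polynomial amounts to a condition on its support (\<open>i \<equiv> j\<close> modulo \<open>n\<close>, resp. \<open>2q\<close>) and a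
  relation between the coefficients of \<open>u^i v^j\<close> and \<open>u^j v^i\<close>. For \<open>(m,q) = \<theta>(n,k)\<close> both
  groups impose the same support condition, \<open>i \<equiv> j (mod 2q)\<close> and \<open>i + j \<equiv> 0 (mod 2(m-q))\<close>, so
  \<open>i\<close> and \<open>j\<close> have equal parity on the support. On such polynomials the linear map
  \<open>u^i v^j \<mapsto> (-1)^(i choose 2) u^i v^j\<close> turns the skew product into the commutative one, and it
  carries the swap relation with eigenvalue \<open>\<omega>^n\<close> to the one with eigenvalue \<open>\<eta>^q\<close>, since on the
  relevant degrees these roots of unity differ exactly by that sign.\<close>

definition qmonom :: "'k::field \<Rightarrow> nat \<times> nat \<Rightarrow> 'k qpoly" where
  "qmonom c x = (\<lambda>m. if m = x then c else 0)"

lemma qmult_qmonom: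
  "qmult e (qmonom A (a,b)) (qmonom B (c,d)) = qmonom (e^(b*c) * A * B) (a+c, b+d)"
proof (rule ext, clarify)
  fix i j
  have "qmult e (qmonom A (a,b)) (qmonom B (c,d)) (i,j) =
    (\<Sum>a'\<le>i. \<Sum>b'\<le>j. if a' = a then (if b' = b then
       (if i - a = c \<and> j - b = d then e^(b*(i-a)) * A * B else 0) else 0) else 0)"
    unfolding qmult_def qmonom_def split by (intro sum.cong refl) auto
  also have "\<dots> = (\<Sum>a'\<le>i. if a' = a then (\<Sum>b'\<le>j. if b' = b then
       (if i - a = c \<and> j - b = d then e^(b*(i-a)) * A * B else 0) else 0) else 0)"
    by (intro sum.cong refl) auto
  also have "\<dots> = qmonom (e^(b*c) * A * B) (a+c, b+d) (i,j)"
    by (auto simp: sum.delta qmonom_def)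
  finally show "qmult e (qmonom A (a,b)) (qmonom B (c,d)) (i,j) =
    qmonom (e^(b*c) * A * B) (a+c, b+d) (i,j)" .
qed

lemma qone_eq_qmonom: "qone = qmonom 1 (0,0)"
  unfolding qone_def qmonom_def by auto

lemma qpow_qmonom_u: "qpow e (qmonom A (1,0)) n = qmonom (A^n) (n,0)"
  by (induction n) (auto simp: qone_eq_qmonom qmult_qmonom mult.commute)

lemma qpow_qmonom_v: "qpow e (qmonom A (0,1)) n = qmonom (A^n) (0,n)"
  by (induction n) (auto simp: qone_eq_qmonom qmult_qmonom mult.commute)

lemma qadd_qsmult_qU_qV:
  "qadd (qsmult x qU) (qsmult 0 qV) = qmonom x (1,0)"
  "qadd (qsmult 0 qU) (qsmult y qV) = qmonom y (0,1)"
  unfolding qadd_def qsmult_def qU_def qV_def qmonom_def by auto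

lemma qact_diagonal:
  assumes "p \<in> qpolys"
  shows "qact e (x,0,0,y) p (i,j) = x^i * y^j * p(i,j)"
proof -
  have "qact e (x,0,0,y) p (i,j) = (\<Sum>z\<in>supp p. p z * qmonom (x^fst z * y^snd z) z (i,j))"
    by (simp only: qact.simps Let_def qadd_qsmult_qU_qV qpow_qmonom_u qpow_qmonom_v
        qmult_qmonom prod.collapse) simp
  also have "\<dots> = (\<Sum>z\<in>supp p. if z = (i,j) then p z * (x^fst z * y^snd z) else 0)"
    by (intro sum.cong refl) (auto simp: qmonom_def)
  also have "\<dots> = x^i * y^j * p(i,j)"
    using assms by (simp add: sum.delta qpolys_def supp_def)
  finally show ?thesis .
qed

lemma qact_antidiagonal:
  assumes "p \<in> qpolys"
  shows "qact e (0,b,c,0) p (i,j) = c^j * b^i * e^(i*j) * p(j,i)"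
proof -
  have "qact e (0,b,c,0) p (i,j) =
      (\<Sum>z\<in>supp p. p z * qmonom (e^(fst z * snd z) * c^fst z * b^snd z) (snd z, fst z) (i,j))"
    by (simp only: qact.simps Let_def qadd_qsmult_qU_qV qpow_qmonom_u qpow_qmonom_v
        qmult_qmonom) simp
  also have "\<dots> = (\<Sum>z\<in>supp p. if z = (j,i) then p z * (e^(fst z * snd z) * c^fst z * b^snd z) else 0)"
    by (intro sum.cong refl) (auto simp: qmonom_def)
  also have "\<dots> = c^j * b^i * e^(i*j) * p(j,i)"
    using assms by (simp add: sum.delta qpolys_def supp_def mult_ac)
  finally show ?thesis .
qed

section \<open>Invariants of a group generated by monomial matrices\<close>

declare qact.simps [simp del]

definition diag_fixes :: "'k::field qpoly \<Rightarrow> 'k \<Rightarrow> 'k \<Rightarrow> bool" where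
  "diag_fixes p x y \<longleftrightarrow> (\<forall>i j. x^i * y^j * p(i,j) = p(i,j))"

definition antidiag_fixes :: "'k::field \<Rightarrow> 'k qpoly \<Rightarrow> 'k \<Rightarrow> 'k \<Rightarrow> bool" where
  "antidiag_fixes e p b c \<longleftrightarrow> (\<forall>i j. p(i,j) = c^j * b^i * e^(i*j) * p(j,i))"

lemma qact_diagonal_eq_iff:
  assumes "p \<in> qpolys"
  shows "qact e (x,0,0,y) p = p \<longleftrightarrow> diag_fixes p x y"
  unfolding fun_eq_iff split_paired_All qact_diagonal[OF assms] diag_fixes_def ..

lemma qact_antidiagonal_eq_iff:
  assumes "p \<in> qpolys"
  shows "qact e (0,b,c,0) p = p \<longleftrightarrow> antidiag_fixes e p b c"
  unfolding fun_eq_iff split_paired_All qact_antidiagonal[OF assms] antidiag_fixes_def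
  by (simp only: eq_commute)

lemma diag_fixes_iff: "diag_fixes p x y \<longleftrightarrow> (\<forall>i j. p(i,j) \<noteq> 0 \<longrightarrow> x^i * y^j = 1)"
  unfolding diag_fixes_def mult_cancel_right2 by blast

lemma power_square_eq_1: "(e::'a::comm_monoid_mult) * e = 1 \<Longrightarrow> e^n * e^n = 1"
  by (metis power_mult_distrib power_one)

lemma diag_fixes_mult:
  "diag_fixes p x y \<Longrightarrow> diag_fixes p x' y' \<Longrightarrow> diag_fixes p (x*x') (y*y')"
  unfolding diag_fixes_iff by (simp add: power_mult_distrib mult_ac)

lemma diag_fixes_inverse:
  "x \<noteq> 0 \<Longrightarrow> y \<noteq> 0 \<Longrightarrow> diag_fixes p x y \<Longrightarrow> diag_fixes p (1/x) (1/y)"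
  unfolding diag_fixes_iff by (simp add: power_one_over)

lemma diag_antidiag_fixes_mult:
  assumes "diag_fixes p x y" and "antidiag_fixes e p b c"
  shows "antidiag_fixes e p (x*b) (y*c)"
  unfolding antidiag_fixes_def
proof (intro allI)
  fix i j
  have "p(i,j) = x^i * y^j * (c^j * b^i * e^(i*j) * p(j,i))"
    using assms unfolding diag_fixes_def antidiag_fixes_def by metis
  then show "p(i,j) = (y*c)^j * (x*b)^i * e^(i*j) * p(j,i)"
    by (simp add: power_mult_distrib mult_ac)
qed

lemma antidiag_diag_fixes_mult:
  assumes "diag_fixes p x y" and "antidiag_fixes e p b c"
  shows "antidiag_fixes e p (b*y) (c*x)"
  unfolding antidiag_fixes_def
proof (intro allI)
  fix i j
  have "p(i,j) = c^j * b^i * e^(i*j) * (x^j * y^i * p(j,i))"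
    using assms unfolding diag_fixes_def antidiag_fixes_def by metis
  then show "p(i,j) = (c*x)^j * (b*y)^i * e^(i*j) * p(j,i)"
    by (simp add: power_mult_distrib mult_ac)
qed

lemma antidiag_fixes_mult:
  assumes "e * e = 1" and "antidiag_fixes e p b c" and "antidiag_fixes e p b' c'"
  shows "diag_fixes p (b*c') (c*b')"
  unfolding diag_fixes_def
proof (intro allI)
  fix i j
  have "p(i,j) = c^j * b^i * e^(i*j) * (c'^i * b'^j * e^(j*i) * p(i,j))"
    using assms(2,3) unfolding antidiag_fixes_def by metis
  then show "(b*c')^i * (c*b')^j * p(i,j) = p(i,j)"
    using power_square_eq_1[OF assms(1), of "i*j"] by (simp add: power_mult_distrib mult_ac)
qed

lemma antidiag_fixes_inverse:
  assumes "e * e = 1" and "b \<noteq> 0" and "c \<noteq> 0" and "antidiag_fixes e p b c"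
  shows "antidiag_fixes e p (1/c) (1/b)"
  unfolding antidiag_fixes_def
proof (intro allI)
  fix i j
  have "(1/b)^j * (1/c)^i * e^(i*j) * p(j,i) =
      (1/b)^j * (1/c)^i * e^(i*j) * (c^i * b^j * e^(j*i) * p(i,j))"
    using assms(4) unfolding antidiag_fixes_def by metis
  also have "\<dots> = p(i,j)"
    using assms(2,3) power_square_eq_1[OF assms(1), of "i*j"]
    by (simp add: power_one_over field_simps mult.commute)
  finally show "p(i,j) = (1/b)^j * (1/c)^i * e^(i*j) * p(j,i)" by simp
qed

definition monomial_stabilizer :: "'k::field \<Rightarrow> 'k qpoly \<Rightarrow> 'k mat2 set" where
  "monomial_stabilizer e p =
     {(x,0,0,y) | x y. x \<noteq> 0 \<and> y \<noteq> 0 \<and> diag_fixes p x y}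
   \<union> {(0,b,c,0) | b c. b \<noteq> 0 \<and> c \<noteq> 0 \<and> antidiag_fixes e p b c}"

lemma monomial_stabilizerE:
  assumes "g \<in> monomial_stabilizer e p"
  obtains x y where "g = (x,0,0,y)" "x \<noteq> 0" "y \<noteq> 0" "diag_fixes p x y"
    | b c where "g = (0,b,c,0)" "b \<noteq> 0" "c \<noteq> 0" "antidiag_fixes e p b c"
  using assms unfolding monomial_stabilizer_def by blast

lemma gen_group_subset_monomial_stabilizer:
  assumes "e * e = 1" and "gens \<subseteq> monomial_stabilizer e p"
  shows "gen_group gens \<subseteq> monomial_stabilizer e p"
proof
  fix g assume "g \<in> gen_group gens"
  then show "g \<in> monomial_stabilizer e p"
  proof (induction rule: gen_group.induct)
    case gg_id
    then show ?case by (auto simp: mid_def monomial_stabilizer_def diag_fixes_def)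
  next
    case (gg_gen g)
    then show ?case using assms(2) by auto
  next
    case (gg_inv g)
    from gg_inv.IH show ?case
      by (cases rule: monomial_stabilizerE)
        (auto simp: monomial_stabilizer_def diag_fixes_inverse antidiag_fixes_inverse[OF assms(1)])
  next
    case (gg_mult g h)
    from gg_mult.IH(1) show ?case
    proof (cases rule: monomial_stabilizerE)
      case g: (1 x y)
      from gg_mult.IH(2) show ?thesis
        by (cases rule: monomial_stabilizerE)
          (use g in \<open>auto simp: monomial_stabilizer_def diag_fixes_mult diag_antidiag_fixes_mult\<close>)
    next
      case g: (2 b c)
      from gg_mult.IH(2) show ?thesis
        by (cases rule: monomial_stabilizerE)
          (use g in \<open>auto simp: monomial_stabilizer_def antidiag_diag_fixes_mult
            antidiag_fixes_mult[OF assms(1)]\<close>)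
    qed
  qed
qed

lemma qact_monomial_stabilizer:
  assumes "p \<in> qpolys" and "g \<in> monomial_stabilizer e p"
  shows "qact e g p = p"
  using assms(2)
proof (cases rule: monomial_stabilizerE)
  case (1 x y)
  then show ?thesis using qact_diagonal_eq_iff[OF assms(1), of e x y] by blast
next
  case (2 b c)
  then show ?thesis using qact_antidiagonal_eq_iff[OF assms(1), of e b c] by blast
qed

lemma invariants_diag_antidiag:
  assumes "e * e = 1" and "x \<noteq> 0" "y \<noteq> 0" "b \<noteq> 0" "c \<noteq> 0"
  shows "invariants e (gen_group {(x,0,0,y), (0,b,c,0)}) =
    {p \<in> qpolys. diag_fixes p x y \<and> antidiag_fixes e p b c}"
proof (intro set_eqI iffI)
  fix p assume "p \<in> invariants e (gen_group {(x,0,0,y), (0,b,c,0)})"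
  then have "p \<in> qpolys" and "qact e (x,0,0,y) p = p" and "qact e (0,b,c,0) p = p"
    unfolding invariants_def by (auto intro: gen_group.gg_gen)
  then show "p \<in> {p \<in> qpolys. diag_fixes p x y \<and> antidiag_fixes e p b c}"
    by (simp add: qact_diagonal_eq_iff qact_antidiagonal_eq_iff)
next
  fix p assume p: "p \<in> {p \<in> qpolys. diag_fixes p x y \<and> antidiag_fixes e p b c}"
  then have "{(x,0,0,y), (0,b,c,0)} \<subseteq> monomial_stabilizer e p"
    using assms(2-) by (auto simp: monomial_stabilizer_def)
  then have "gen_group {(x,0,0,y), (0,b,c,0)} \<subseteq> monomial_stabilizer e p"
    by (rule gen_group_subset_monomial_stabilizer[OF assms(1)])
  then show "p \<in> invariants e (gen_group {(x,0,0,y), (0,b,c,0)})"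
    using p qact_monomial_stabilizer unfolding invariants_def by blast
qed

section \<open>Roots of unity\<close>

lemma primitive_root_nonzero: "primitive_root M (z::'k::field) \<Longrightarrow> z \<noteq> 0"
  unfolding primitive_root_def by (cases "z = 0") (auto simp: power_0_left)

lemma primitive_root_power_eq_1_iff:
  assumes "primitive_root M (z::'k::field)"
  shows "z^d = 1 \<longleftrightarrow> M dvd d"
proof -
  from assms have M: "M > 0" "z^M = 1" "\<forall>j. 0 < j \<and> j < M \<longrightarrow> z^j \<noteq> 1"
    by (auto simp: primitive_root_def)
  have "z^d = (z^M)^(d div M) * z^(d mod M)"
    by (metis div_mult_mod_eq power_add power_mult mult.commute)
  then have reduce: "z^d = z^(d mod M)" using M by simp
  show ?thesis
  proof
    assume "z^d = 1"
    then have "d mod M = 0" using reduce M by (metis mod_less_divisor neq0_conv)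
    then show "M dvd d" by (simp add: mod_eq_0_iff_dvd)
  next
    assume "M dvd d"
    then show "z^d = 1" using reduce by simp
  qed
qed

lemma primitive_root_power_eq_iff:
  assumes "primitive_root M (z::'k::field)"
  shows "z^a = z^b \<longleftrightarrow> int M dvd int a - int b"
proof -
  have ordered: "z^a = z^b \<longleftrightarrow> int M dvd int a - int b" if "a \<le> b" for a b
  proof -
    have "z^b = z^a * z^(b-a)" using that by (metis le_add_diff_inverse power_add)
    then have "z^a = z^b \<longleftrightarrow> z^(b-a) = 1" using primitive_root_nonzero[OF assms] by auto
    also have "\<dots> \<longleftrightarrow> M dvd (b - a)" by (rule primitive_root_power_eq_1_iff[OF assms])
    also have "\<dots> \<longleftrightarrow> int M dvd int a - int b"
      using that by (metis dvd_minus_iff minus_diff_eq int_dvd_int_iff of_nat_diff)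
    finally show ?thesis .
  qed
  show ?thesis
    using ordered[of a b] ordered[of b a] by (metis dvd_minus_iff minus_diff_eq nle_le)
qed

lemma primitive_root_half_power:
  assumes "primitive_root (2*L) (z::'k::field)"
  shows "z^L = -1"
proof -
  have "(z^L)^2 = 1" using assms by (simp add: primitive_root_def power_mult[symmetric] mult.commute)
  moreover have "z^L \<noteq> 1" using assms by (simp add: primitive_root_def)
  ultimately show ?thesis by (simp add: power2_eq_1_iff)
qed

section \<open>The twist\<close>

text \<open>\<open>twist_sign n = (-1)^(n choose 2)\<close>.\<close>
fun twist_sign :: "nat \<Rightarrow> 'k::field" where
  "twist_sign 0 = 1"
| "twist_sign (Suc n) = (-1)^n * twist_sign n"

lemma twist_sign_add: "(twist_sign (a + c) :: 'k::field) = twist_sign a * twist_sign c * (-1)^(a*c)"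
  by (induction c) (simp_all add: power_add mult_ac)

lemma twist_sign_square: "(twist_sign a :: 'k::field) * twist_sign a = 1"
  by (induction a) (auto simp: algebra_simps power_mult_distrib[symmetric])

lemma twist_sign_nonzero [simp]: "(twist_sign a :: 'k::field) \<noteq> 0"
  using twist_sign_square[of a, where 'k='k] by auto

lemma twist_sign_double: "(twist_sign (2*x) :: 'k::field) = (-1)^x"
  using twist_sign_add[of x x, where 'k='k]
  by (simp add: mult_2 twist_sign_square minus_one_power_iff)

definition twist :: "'k::field qpoly \<Rightarrow> 'k qpoly" where
  "twist p = (\<lambda>(i,j). twist_sign i * p(i,j))"

lemma twist_apply [simp]: "twist p (i,j) = twist_sign i * p(i,j)"
  by (simp add: twist_def)

lemma twist_twist [simp]: "twist (twist p) = p"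
  by (simp add: fun_eq_iff mult.assoc[symmetric] twist_sign_square)

lemma twist_qpolys_iff [simp]: "twist p \<in> qpolys \<longleftrightarrow> p \<in> qpolys"
proof -
  have "supp (twist p) = supp p" unfolding supp_def by auto
  then show ?thesis by (simp add: qpolys_def)
qed

lemma twist_qadd: "twist (qadd p q) = qadd (twist p) (twist q)"
  by (simp add: fun_eq_iff qadd_def algebra_simps)

lemma twist_qsmult: "twist (qsmult c p) = qsmult c (twist p)"
  by (simp add: fun_eq_iff qsmult_def algebra_simps)

lemma twist_qone: "twist qone = qone"
  by (auto simp: fun_eq_iff qone_def)

text \<open>On monomials \<open>u^a v^b\<close> with \<open>a \<equiv> b (mod 2)\<close> the twist turns the skew product into the
  commutative one: the sign \<open>(-1)^(b*c)\<close> of the skew product equals \<open>(-1)^(a*c)\<close>, which is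
  exactly the defect of \<open>twist_sign\<close> from being multiplicative.\<close>
lemma twist_qmult:
  fixes x y :: "'k::field qpoly"
  assumes balanced: "\<And>a b. x(a,b) \<noteq> 0 \<Longrightarrow> even a \<longleftrightarrow> even b"
  shows "twist (qmult (-1) x y) = qmult 1 (twist x) (twist y)"
proof (rule ext, clarify)
  fix i j
  have "twist (qmult (-1) x y) (i,j) =
      (\<Sum>a\<le>i. \<Sum>b\<le>j. twist_sign i * ((-1)^(b*(i-a)) * x(a,b) * y(i-a,j-b)))"
    by (simp add: qmult_def sum_distrib_left)
  also have "\<dots> = (\<Sum>a\<le>i. \<Sum>b\<le>j. 1^(b*(i-a)) * twist x (a,b) * twist y (i-a,j-b))"
  proof (intro sum.cong refl)
    fix a b assume "a \<in> {..i}"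
    then have "(twist_sign i :: 'k) = twist_sign a * twist_sign (i-a) * (-1)^(a*(i-a))"
      using twist_sign_add[of a "i-a"] by simp
    moreover have "x(a,b) \<noteq> 0 \<Longrightarrow> ((-1::'k)^(b*(i-a))) = (-1)^(a*(i-a))"
      using balanced by (simp add: minus_one_power_iff)
    ultimately show "twist_sign i * ((-1)^(b*(i-a)) * x(a,b) * y(i-a,j-b)) =
        1^(b*(i-a)) * twist x (a,b) * twist y (i-a,j-b)"
      by (cases "x(a,b) = 0") (auto simp: mult_ac power_mult_distrib[symmetric])
  qed
  also have "\<dots> = qmult 1 (twist x) (twist y) (i,j)"
    by (simp add: qmult_def)
  finally show "twist (qmult (-1) x y) (i,j) = qmult 1 (twist x) (twist y) (i,j)" .
qed

lemma twist_swap_eq_iff: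
  assumes "c^(i+j) = twist_sign (i+j) * b^(i+j)"
  shows "twist p (i,j) = c^j * c^i * 1^(i*j) * twist p (j,i) \<longleftrightarrow>
    p(i,j) = b^j * b^i * (-1)^(i*j) * p(j,i)"
proof -
  have "c^j * c^i = twist_sign i * twist_sign j * (-1)^(i*j) * b^j * b^i"
    using assms by (simp add: twist_sign_add power_add mult_ac)
  then have "c^j * c^i * 1^(i*j) * twist p (j,i) =
      twist_sign i * (twist_sign j * twist_sign j) * (b^j * b^i * (-1)^(i*j) * p(j,i))"
    by (simp add: mult_ac)
  then have rhs: "c^j * c^i * 1^(i*j) * twist p (j,i) = twist_sign i * (b^j * b^i * (-1)^(i*j) * p(j,i))"
    by (simp only: twist_sign_square mult_1_right)
  show ?thesis
    unfolding rhs by (simp only: twist_apply mult_cancel_left twist_sign_nonzero simp_thms)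
qed

lemma antidiag_fixes_twist_iff:
  assumes "\<And>i j. p(i,j) \<noteq> 0 \<Longrightarrow> c^(i+j) = twist_sign (i+j) * b^(i+j)"
  shows "antidiag_fixes 1 (twist p) c c \<longleftrightarrow> antidiag_fixes (-1) p b b"
proof -
  have "twist p (i,j) = c^j * c^i * 1^(i*j) * twist p (j,i) \<longleftrightarrow>
      p(i,j) = b^j * b^i * (-1)^(i*j) * p(j,i)" for i j
  proof (cases "p(i,j) = 0 \<and> p(j,i) = 0")
    case False
    then have "c^(i+j) = twist_sign (i+j) * b^(i+j)"
      using assms[of i j] assms[of j i] by (auto simp: add.commute)
    then show ?thesis by (rule twist_swap_eq_iff)
  qed simp
  then show ?thesis unfolding antidiag_fixes_def by blast
qed

lemma diag_fixes_primitive_root_iff: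
  assumes z: "primitive_root (A*B) (z::'k::field)" and "0 < B"
  shows "diag_fixes p (z^B) (inverse (z^B)) \<longleftrightarrow>
    (\<forall>i j. p(i,j) \<noteq> 0 \<longrightarrow> int A dvd int i - int j)"
proof -
  have "(z^B)^i * (inverse (z^B))^j = 1 \<longleftrightarrow> int A dvd int i - int j" for i j
  proof -
    have "(z^B)^i * (inverse (z^B))^j = 1 \<longleftrightarrow> z^(B*i) = z^(B*j)"
      using primitive_root_nonzero[OF z] by (simp add: power_mult power_inverse field_simps)
    also have "\<dots> \<longleftrightarrow> int B * int A dvd int B * (int i - int j)"
      by (simp add: primitive_root_power_eq_iff[OF z] algebra_simps)
    finally show ?thesis using \<open>0 < B\<close> by simp
  qed
  then show ?thesis unfolding diag_fixes_iff by blast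
qed

lemma antidiag_fixes_primitive_root_support:
  assumes "e * e = (1::'k::field)" and fixed: "antidiag_fixes e p (z^C) (z^C)"
    and z: "primitive_root (2*C*D) z" and "0 < C" and "p(i,j) \<noteq> 0"
  shows "D dvd i + j"
proof -
  have "p(i,j) = (z^C)^j * (z^C)^i * e^(i*j) * ((z^C)^i * (z^C)^j * e^(j*i) * p(i,j))"
    using fixed unfolding antidiag_fixes_def by metis
  also have "\<dots> = (z^C)^(i+j) * (z^C)^(i+j) * (e^(i*j) * e^(i*j)) * p(i,j)"
    by (simp only: power_add mult_ac)
  finally have "(z^C)^(i+j) * (z^C)^(i+j) = 1"
    using \<open>p(i,j) \<noteq> 0\<close> power_square_eq_1[OF assms(1)] by simp
  then have "z^(C*(2*(i+j))) = 1"
    by (metis power_add power_mult mult_2)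
  then have "C * (2 * D) dvd C * (2 * (i+j))"
    using primitive_root_power_eq_1_iff[OF z] by (simp only: mult_ac)
  then show ?thesis
    using \<open>0 < C\<close> by (metis nat_mult_dvd_cancel1 zero_less_numeral)
qed

lemma coprime_mult_dvd_iff:
  fixes a b c :: "'a::semiring_gcd"
  shows "coprime a b \<Longrightarrow> a * b dvd c \<longleftrightarrow> a dvd c \<and> b dvd c"
  by (auto intro: divides_mult dest: dvd_mult_left dvd_mult_right)

text \<open>\<open>N, K, Q, R\<close> stand for \<open>n, k, q, m - q\<close>; the assumption \<open>related\<close> says
  \<open>\<theta>(n,k) = (m,q)\<close>, and \<open>skew_group\<close>, \<open>dihedral_group\<close> are \<open>G_{n,k}\<close> and \<open>D_{m,q}\<close>
  written with natural exponents.\<close>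

context
  fixes w \<eta> :: "'k::field" and N K Q R :: nat
  assumes w: "primitive_root (2*N*K) w" and \<eta>: "primitive_root (4*Q*R) \<eta>"
    and related: "(odd N \<and> Q = N \<and> K = 2*R \<and> even R) \<or> (even N \<and> N = 2*Q \<and> R = K \<and> odd K)"
begin

abbreviation skew_group :: "'k mat2 set" where
  "skew_group \<equiv> gen_group {(w^(2*K), 0, 0, inverse (w^(2*K))), (0, w^N, w^N, 0)}"

abbreviation dihedral_group :: "'k mat2 set" where
  "dihedral_group \<equiv> gen_group {(\<eta>^(2*R), 0, 0, inverse (\<eta>^(2*R))), (0, \<eta>^Q, \<eta>^Q, 0)}"

lemma exponents_positive: "0 < N" "0 < K" "0 < Q" "0 < R"
  using w \<eta> by (auto simp: primitive_root_def)

lemma support_condition_iff: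
  "int N dvd int i - int j \<and> K dvd i + j \<longleftrightarrow> int (2*Q) dvd int i - int j \<and> 2*R dvd i + j"
proof -
  have parity: "2 dvd int i - int j \<longleftrightarrow> 2 dvd i + j" by simp
  show ?thesis
  proof (cases "odd N")
    case True
    then have "Q = N" "K = 2*R" using related by auto
    moreover have "int (2*N) dvd int i - int j \<longleftrightarrow> 2 dvd int i - int j \<and> int N dvd int i - int j"
      using coprime_mult_dvd_iff[of 2 "int N"] True by simp
    ultimately show ?thesis using parity by (auto dest: dvd_mult_left)
  next
    case False
    then have "N = 2*Q" "R = K" "odd K" using related by auto
    moreover have "2*K dvd i + j \<longleftrightarrow> 2 dvd i + j \<and> K dvd i + j"
      using coprime_mult_dvd_iff[of 2 K] \<open>odd K\<close> by simp
    ultimately show ?thesis using parity by (auto dest: dvd_mult_left)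
  qed
qed

lemma swap_eigenvalue_relation:
  assumes "2*R dvd s"
  shows "(\<eta>^Q)^s = twist_sign s * (w^N)^s"
proof -
  obtain t where t: "s = 2*R*t" using assms by blast
  have "(\<eta>^Q)^s = (\<eta>^(2*Q*R))^t"
    unfolding t power_mult[symmetric] by (simp add: mult_ac)
  also have "\<eta>^(2*Q*R) = -1"
    using primitive_root_half_power[of "2*Q*R" \<eta>] \<eta> by (simp add: mult_ac)
  finally have eta: "(\<eta>^Q)^s = (-1)^t" .
  have w1: "w^(N*K) = -1" using primitive_root_half_power[of "N*K" w] w by (simp add: mult_ac)
  have sign: "(twist_sign s :: 'k) = (-1)^(R*t)" using twist_sign_double[of "R*t"] t by (simp add: mult_ac)
  show ?thesis
  proof (cases "odd N")
    case True
    then have "K = 2*R" "even R" using related by auto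
    have "(w^N)^s = (w^(N*K))^t"
      unfolding t \<open>K = 2*R\<close> power_mult[symmetric] by (simp add: mult_ac)
    then have "(w^N)^s = (-1)^t" using w1 by simp
    then show ?thesis using eta sign \<open>even R\<close> by simp
  next
    case False
    then have "R = K" "odd K" using related by auto
    have "(w^N)^s = (w^(N*K))^(2*t)"
      unfolding t \<open>R = K\<close> power_mult[symmetric] by (simp add: mult_ac)
    then have "(w^N)^s = 1" using w1 by simp
    then show ?thesis using eta sign \<open>odd K\<close> \<open>R = K\<close> by (simp add: minus_one_power_iff)
  qed
qed

lemma skew_invariants_eq:
  "invariants (-1) skew_group =
    {p \<in> qpolys. diag_fixes p (w^(2*K)) (inverse (w^(2*K))) \<and> antidiag_fixes (-1) p (w^N) (w^N)}"
  using primitive_root_nonzero[OF w] by (intro invariants_diag_antidiag) auto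

lemma dihedral_invariants_eq:
  "invariants 1 dihedral_group =
    {p \<in> qpolys. diag_fixes p (\<eta>^(2*R)) (inverse (\<eta>^(2*R))) \<and> antidiag_fixes 1 p (\<eta>^Q) (\<eta>^Q)}"
  using primitive_root_nonzero[OF \<eta>] by (intro invariants_diag_antidiag) auto

lemma skew_diag_fixes_iff:
  "diag_fixes p (w^(2*K)) (inverse (w^(2*K))) \<longleftrightarrow> (\<forall>i j. p(i,j) \<noteq> 0 \<longrightarrow> int N dvd int i - int j)"
  using w exponents_positive by (intro diag_fixes_primitive_root_iff) (simp_all add: mult_ac)

lemma dihedral_diag_fixes_iff:
  "diag_fixes p (\<eta>^(2*R)) (inverse (\<eta>^(2*R))) \<longleftrightarrow> (\<forall>i j. p(i,j) \<noteq> 0 \<longrightarrow> int (2*Q) dvd int i - int j)"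
  using \<eta> exponents_positive by (intro diag_fixes_primitive_root_iff) (simp_all add: mult_ac)

lemma skew_invariant_support:
  assumes "p \<in> invariants (-1) skew_group" and "p(i,j) \<noteq> 0"
  shows "int (2*Q) dvd int i - int j \<and> 2*R dvd i + j"
proof -
  have "K dvd i + j"
    using assms w exponents_positive
    by (intro antidiag_fixes_primitive_root_support[of "-1" p w N K]) (auto simp: skew_invariants_eq)
  moreover have "int N dvd int i - int j"
    using assms by (auto simp: skew_invariants_eq skew_diag_fixes_iff)
  ultimately show ?thesis using support_condition_iff by blast
qed

lemma dihedral_invariant_support:
  assumes "p \<in> invariants 1 dihedral_group" and "p(i,j) \<noteq> 0"
  shows "int (2*Q) dvd int i - int j \<and> 2*R dvd i + j"
proof -
  have "antidiag_fixes 1 p (\<eta>^Q) (\<eta>^Q)"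
    using assms(1) by (simp add: dihedral_invariants_eq)
  moreover have "primitive_root (2*Q*(2*R)) \<eta>"
    using \<eta> by (simp add: mult_ac)
  ultimately have "2*R dvd i + j"
    using assms(2) exponents_positive
    by (intro antidiag_fixes_primitive_root_support[of 1 p \<eta> Q "2*R"]) simp_all
  moreover have "int (2*Q) dvd int i - int j"
    using assms by (auto simp: dihedral_invariants_eq dihedral_diag_fixes_iff)
  ultimately show ?thesis by blast
qed

lemma twist_mem_invariants_iff_supported:
  assumes support: "\<And>i j. p(i,j) \<noteq> 0 \<Longrightarrow> int (2*Q) dvd int i - int j \<and> 2*R dvd i + j"
  shows "twist p \<in> invariants 1 dihedral_group \<longleftrightarrow> p \<in> invariants (-1) skew_group"
proof -
  have "diag_fixes (twist p) (\<eta>^(2*R)) (inverse (\<eta>^(2*R)))"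
    using support by (simp add: dihedral_diag_fixes_iff)
  moreover have "diag_fixes p (w^(2*K)) (inverse (w^(2*K)))"
    unfolding skew_diag_fixes_iff using support support_condition_iff by blast
  moreover have "antidiag_fixes 1 (twist p) (\<eta>^Q) (\<eta>^Q) \<longleftrightarrow> antidiag_fixes (-1) p (w^N) (w^N)"
    using support swap_eigenvalue_relation by (intro antidiag_fixes_twist_iff) blast
  ultimately show ?thesis
    by (simp add: skew_invariants_eq dihedral_invariants_eq)
qed

lemma twist_mem_invariants_iff:
  "twist p \<in> invariants 1 dihedral_group \<longleftrightarrow> p \<in> invariants (-1) skew_group"
proof
  assume "twist p \<in> invariants 1 dihedral_group"
  moreover have "int (2*Q) dvd int i - int j \<and> 2*R dvd i + j" if "p(i,j) \<noteq> 0" for i j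
    using dihedral_invariant_support[OF calculation, of i j] that by simp
  ultimately show "p \<in> invariants (-1) skew_group"
    using twist_mem_invariants_iff_supported by blast
qed (use twist_mem_invariants_iff_supported skew_invariant_support in blast)

lemma alg_iso_invariants_skew_dihedral:
  "alg_iso_invariants (-1) skew_group 1 dihedral_group"
  unfolding alg_iso_invariants_def
proof (intro exI[of _ twist] conjI ballI allI)
  show "bij_betw twist (invariants (-1) skew_group) (invariants 1 dihedral_group)"
    by (rule bij_betw_byWitness[where f'=twist]) (auto simp flip: twist_mem_invariants_iff)
next
  fix x y assume x: "x \<in> invariants (-1) skew_group"
  show "twist (qadd x y) = qadd (twist x) (twist y)" by (rule twist_qadd)
  have "even a \<longleftrightarrow> even b" if "x(a,b) \<noteq> 0" for a b
  proof -
    have "2 * int Q dvd int a - int b" using skew_invariant_support[OF x that] by simp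
    then have "2 dvd int a - int b" by (rule dvd_mult_left)
    then show ?thesis by simp
  qed
  then show "twist (qmult (-1) x y) = qmult 1 (twist x) (twist y)" by (rule twist_qmult)
qed (simp_all add: twist_qsmult twist_qone)

end

section \<open>The bijection \<open>\<theta>\<close>\<close>

lemma S_set_theta:
  assumes "x \<in> S_set"
  shows "theta x \<in> T_set \<and> theta_inv (theta x) = x"
proof -
  obtain n k where x: "x = (n,k)" by fastforce
  with assms have "k > 0" "coprime n k" "n \<ge> 3" "odd (n - k)" "k mod 4 \<noteq> 2"
    by (auto simp: S_set_def coprime_iff_gcd_eq_1)
  show ?thesis
  proof (cases "odd n")
    case True
    then have "even k" using \<open>odd (n - k)\<close> by auto
    then obtain h where h: "k = 2*h" by blast
    then have "even h" using \<open>k mod 4 \<noteq> 2\<close> by presburger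
    have "coprime n h" using \<open>coprime n k\<close> h by simp
    then have "coprime (n + h) n"
      by (metis add.commute coprime_iff_gcd_eq_1 gcd.commute gcd_add1)
    then show ?thesis
      using True h \<open>even h\<close> \<open>k > 0\<close> \<open>n \<ge> 3\<close>
      by (simp add: x theta_def theta_inv_def T_set_def coprime_iff_gcd_eq_1)
  next
    case False
    then obtain h where h: "n = 2*h" by blast
    have "odd k" using False \<open>odd (n - k)\<close> by simp
    have "coprime h k" using \<open>coprime n k\<close> h by simp
    then have "coprime (h + k) h"
      by (metis add.commute coprime_iff_gcd_eq_1 gcd.commute gcd_add1)
    then show ?thesis
      using False h \<open>odd k\<close> \<open>k > 0\<close> \<open>n \<ge> 3\<close>
      by (simp add: x theta_def theta_inv_def T_set_def coprime_iff_gcd_eq_1)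
  qed
qed

lemma T_set_theta_inv:
  assumes "y \<in> T_set"
  shows "theta_inv y \<in> S_set \<and> theta (theta_inv y) = y"
proof -
  obtain m q where y: "y = (m,q)" by fastforce
  with assms have "1 < q" "q < m" "coprime m q"
    by (auto simp: T_set_def coprime_iff_gcd_eq_1)
  then have "coprime (m - q) q"
    by (metis coprime_iff_gcd_eq_1 gcd_diff1)
  show ?thesis
  proof (cases "even (m - q)")
    case True
    then have "odd q"
      using \<open>coprime m q\<close> by (metis coprime_common_divisor diff_add_cancel even_add odd_one)
    then have "coprime q 2" by simp
    then have "coprime q (2*(m-q))"
      using \<open>coprime (m - q) q\<close> by (metis coprime_commute coprime_mult_right_iff)
    moreover have "q \<ge> 3" using \<open>odd q\<close> \<open>1 < q\<close> by presburger
    moreover have "(2*(m-q)) mod 4 \<noteq> 2" using True by presburger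
    ultimately show ?thesis
      using True \<open>odd q\<close> \<open>q < m\<close>
      by (simp add: y theta_def theta_inv_def S_set_def coprime_iff_gcd_eq_1)
  next
    case False
    then have "coprime (2*q) (m - q)"
      using \<open>coprime (m - q) q\<close> by (simp add: coprime_commute)
    moreover have "(m - q) mod 4 \<noteq> 2" using False by presburger
    ultimately show ?thesis
      using False \<open>1 < q\<close> \<open>q < m\<close>
      by (simp add: y theta_def theta_inv_def S_set_def coprime_iff_gcd_eq_1)
  qed
qed

lemma bij_betw_theta: "bij_betw theta S_set T_set"
  using S_set_theta T_set_theta_inv by (intro bij_betw_byWitness[where f'=theta_inv]) auto

lemma theta_relation:
  assumes "(n,k) \<in> S_set" and "theta (n,k) = (m,q)"
  shows "(odd n \<and> q = n \<and> k = 2*(m-q) \<and> even (m-q)) \<or> (even n \<and> n = 2*q \<and> m - q = k \<and> odd k)"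
proof -
  have "theta_inv (m,q) = (n,k)" using S_set_theta[OF assms(1)] assms(2) by simp
  moreover have "odd (n - k)" using assms(1) by (simp add: S_set_def)
  ultimately show ?thesis by (auto simp: theta_inv_def split: if_splits)
qed

lemma G_grp_nat:
  "G_grp (int N) (int K) w = gen_group {(w^(2*K), 0, 0, inverse (w^(2*K))), (0, w^N, w^N, 0)}"
proof -
  have "w powi (2 * int K) = w^(2*K)" "w powi (-2 * int K) = inverse (w^(2*K))"
    by (simp_all add: power_int_minus flip: power_int_of_nat)
  then show ?thesis by (simp add: G_grp_def)
qed

lemma D_grp_nat:
  "D_grp (int Q + int R) (int Q) \<eta> =
    gen_group {(\<eta>^(2*R), 0, 0, inverse (\<eta>^(2*R))), (0, \<eta>^Q, \<eta>^Q, 0)}"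
proof -
  have "\<eta> powi (2 * int R) = \<eta>^(2*R)" "\<eta> powi (-2 * int R) = inverse (\<eta>^(2*R))"
    by (simp_all add: power_int_minus flip: power_int_of_nat)
  then show ?thesis by (simp add: D_grp_def)
qed

lemma alg_iso_invariants_G_grp_D_grp:
  fixes w \<eta> :: "'k::field"
  assumes S: "(n,k) \<in> S_set" and theta: "theta (n,k) = (m,q)"
    and w: "primitive_root (nat (2*n*k)) w" and \<eta>: "primitive_root (nat (4*q*(m-q))) \<eta>"
  shows "alg_iso_invariants (-1) (G_grp n k w) 1 (D_grp m q \<eta>)"
proof -
  have "n \<ge> 0" "k \<ge> 0" using S by (auto simp: S_set_def)
  moreover have "q \<ge> 0" "m - q \<ge> 0" using S_set_theta[OF S] theta by (auto simp: T_set_def)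
  ultimately obtain N K Q R where
    nat: "n = int N" "k = int K" "q = int Q" "m = int Q + int R"
    by (metis diff_add_cancel add.commute nonneg_int_cases)
  from w \<eta> have "primitive_root (2*N*K) w" "primitive_root (4*Q*R) \<eta>"
    by (simp_all add: nat nat_mult_distrib)
  moreover have "(odd N \<and> Q = N \<and> K = 2*R \<and> even R) \<or> (even N \<and> N = 2*Q \<and> R = K \<and> odd K)"
    using theta_relation[OF S theta] by (auto simp: nat)
  ultimately show ?thesis
    unfolding nat G_grp_nat D_grp_nat by (rule alg_iso_invariants_skew_dihedral)
qed

theorem mainTheorem17:
  fixes kk :: "'k::field_char_0 itself"
  assumes "alg_closed TYPE('k)"
  shows "theta ` S_set \<subseteq> T_set
    \<and> bij_betw theta S_set T_set
    \<and> (\<forall>x\<in>S_set. theta_inv (theta x) = x)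
    \<and> (\<forall>y\<in>T_set. theta_inv y \<in> S_set \<and> theta (theta_inv y) = y)
    \<and> (\<forall>n k m q. \<forall>w \<eta> :: 'k.
          (n,k) \<in> S_set \<longrightarrow> theta (n,k) = (m,q)
          \<longrightarrow> primitive_root (nat (2*n*k)) w
          \<longrightarrow> primitive_root (nat (4*q*(m-q))) \<eta>
          \<longrightarrow> alg_iso_invariants (-1) (G_grp n k w) 1 (D_grp m q \<eta>))"
  using S_set_theta T_set_theta_inv bij_betw_theta alg_iso_invariants_G_grp_D_grp by blast

end
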